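(* For integers $s,t\ge0$ let $m_{i,j}^{s,t}=\int_{(0,1)^2}\frac{x^{s+i}y^{s+j}}{x+y}\left(\frac{1-x}{1+x}\right)^t\left(\frac{1-y}{1+y}\right)^tdx\,dy$, $\tau_n^{s,t}=\det(m_{i,j}^{s,t})_{i,j=0}^{n-1}$, $\xi_n^{s,t}=\det(m_{i,j+1}^{s,t})_{i,j=0}^{n-1}$ (with $\tau_0^{s,t}=\xi_0^{s,t}=1$), $$P_n^{s,t}(x)=\frac{1}{\tau_n^{s,t}}\det\begin{pmatrix} m_{0,0}^{s,t}&\cdots&m_{0,n-1}^{s,t}&1\\ \vdots&&\vdots&\vdots\\ m_{n,0}^{s,t}&\cdots&m_{n,n-1}^{s,t}&x^n\end{pmatrix},\qquad Q_n^{s,t}(x)=\frac{1}{\xi_n^{s,t}}\det\begin{pmatrix} m_{0,1}^{s,t}&\cdots&m_{0,n}^{s,t}&1\\ \vdots&&\vdots&\vdots\\ m_{n,1}^{s,t}&\cdots&m_{n,n}^{s,t}&x^n\end{pmatrix}.$$ Then for all $n\ge1$ and $s,t\ge0$, $$Q_n^{s,t}(x)=xP_{n-1}^{s+1,t}(x)-\frac{\xi_{n-1}^{s,t}\tau_n^{s+1,t}}{\xi_n^{s,t}\tau_{n-1}^{s+1,t}}Q_{n-1}^{s,t}(x).$$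
   Context: $m_{i,j}^{s,t}=\langle x^i,y^j\rangle_{s,t}$ for the bilinear form $\langle f,g\rangle_{s,t}=\int_{(0,1)^2}\frac{x^sy^s}{x+y}f(x)g(y)\left(\frac{1-x}{1+x}\right)^t\left(\frac{1-y}{1+y}\right)^tdx\,dy$. The determinants $\tau_n^{s,t},\xi_n^{s,t}$ are positive, so the polynomials are well defined and monic. *)

theory Defs
  imports "HOL-Analysis.Analysis" "Jordan_Normal_Form.Determinant"
begin

definition mom :: "nat \<Rightarrow> nat \<Rightarrow> nat \<Rightarrow> nat \<Rightarrow> real" where
  "mom s t i j = (LINT p : {0<..<1} \<times> {0<..<1} | (lborel :: (real \<times> real) measure).
      (fst p) ^ (s + i) * (snd p) ^ (s + j) / (fst p + snd p)
      * ((1 - fst p) / (1 + fst p)) ^ t * ((1 - snd p) / (1 + snd p)) ^ t)"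

definition tau :: "nat \<Rightarrow> nat \<Rightarrow> nat \<Rightarrow> real" where
  "tau n s t = Determinant.det (Matrix.mat n n (\<lambda>(i, j). mom s t i j))"

definition xi :: "nat \<Rightarrow> nat \<Rightarrow> nat \<Rightarrow> real" where
  "xi n s t = Determinant.det (Matrix.mat n n (\<lambda>(i, j). mom s t i (j + 1)))"

definition Ppoly :: "nat \<Rightarrow> nat \<Rightarrow> nat \<Rightarrow> real \<Rightarrow> real" where
  "Ppoly n s t x = Determinant.det (Matrix.mat (n + 1) (n + 1)
      (\<lambda>(i, j). if j < n then mom s t i j else x ^ i)) / tau n s t"

definition Qpoly :: "nat \<Rightarrow> nat \<Rightarrow> nat \<Rightarrow> real \<Rightarrow> real" where
  "Qpoly n s t x = Determinant.det (Matrix.mat (n + 1) (n + 1)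
      (\<lambda>(i, j). if j < n then mom s t i (j + 1) else x ^ i)) / xi n s t"

end

theory Submission
  imports Defs "HOL-Probability.Infinite_Product_Measure"
begin

text \<open>
  Expanding the bordered determinant that defines Q along its last column, the coefficient
  vector of Q consists of cofactors, and these are annihilated by every column of the moment
  matrix except the last one. Since m^(s+1)_(i,j) = m^s_(i+1,j+1), the coefficients of
  x P^(s+1)_(n-1) are cofactors of the same matrix shifted down by one row. Hence, once the
  denominators are cleared, the coefficient vector of the difference of the two sides of the
  recurrence is annihilated by all columns of the matrix (m^s_(i,j+1)) of size n, and it
  vanishes because that matrix is nonsingular.

  Nonsingularity, in fact positivity, of the determinants xi and tau comes from total
  positivity. Writing the moments as integrals of phi_i(x) psi_j(x) with
  phi_i(x) = x^(s+i) w(x) and psi_j(x) = integral of y^(s+1+j) w(y) / (x + y), Andreief's identity expresses k! times the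
  determinant as the integral over (0,1)^k of det(phi_i(X_l)) det(psi_j(X_l)). The first factor
  is a weighted Vandermonde determinant; applying Andreief's identity once more, the second
  is an integral of a Cauchy determinant times a Vandermonde determinant, so it equals the
  Vandermonde determinant of X times a positive number. The integrand is therefore nonnegative,
  and positive on the injective tuples, which form a set of positive measure.
\<close>

section \<open>Vandermonde and Cauchy determinants\<close>

lemma index_mult_mat_mat:
  fixes f g :: "nat \<times> nat \<Rightarrow> 'a :: comm_ring_1"
  assumes "i < n" "j < n"
  shows "(mat n n f * mat n n g) $$ (i, j) = (\<Sum>m<n. f (i, m) * g (m, j))"
  using assms by (simp add: scalar_prod_def atLeast0LessThan)

lemma det_mat_scaled:
  fixes A :: "nat \<Rightarrow> nat \<Rightarrow> 'a :: comm_ring_1"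
  shows "det (mat n n (\<lambda>(i, j). c i * A i j * d j))
     = (\<Prod>i<n. c i) * (\<Prod>j<n. d j) * det (mat n n (\<lambda>(i, j). A i j))"
proof -
  have "det (mat n n (\<lambda>(i, j). c i * A i j * d j))
     = (\<Sum>p\<in>{p. p permutes {0..<n}}. signof p * (\<Prod>i=0..<n. c i * A i (p i) * d (p i)))"
    by (subst det_def'[of _ n]) auto
  also have "\<dots> = (\<Sum>p\<in>{p. p permutes {0..<n}}.
      (\<Prod>i<n. c i) * (\<Prod>j<n. d j) * (signof p * (\<Prod>i=0..<n. A i (p i))))"
  proof (rule sum.cong[OF refl])
    fix p assume "p \<in> {p. p permutes {0..<n}}"
    then have "(\<Prod>i=0..<n. d (p i)) = (\<Prod>j=0..<n. d j)"
      using prod.permute[of p "{0..<n}" d] by (simp add: comp_def)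
    then show "signof p * (\<Prod>i=0..<n. c i * A i (p i) * d (p i))
        = (\<Prod>i<n. c i) * (\<Prod>j<n. d j) * (signof p * (\<Prod>i=0..<n. A i (p i)))"
      by (simp add: prod.distrib atLeast0LessThan mult_ac)
  qed
  also have "\<dots> = (\<Prod>i<n. c i) * (\<Prod>j<n. d j) * det (mat n n (\<lambda>(i, j). A i j))"
    by (subst det_def'[of _ n]) (auto simp: sum_distrib_left)
  finally show ?thesis .
qed

lemma det_first_row_zero:
  fixes A :: "'a :: comm_ring_1 mat"
  assumes A: "A \<in> carrier_mat (Suc n) (Suc n)"
    and zero: "\<And>j. 0 < j \<Longrightarrow> j < Suc n \<Longrightarrow> A $$ (0, j) = 0"
  shows "det A = A $$ (0, 0) * det (mat n n (\<lambda>(i, j). A $$ (Suc i, Suc j)))"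
proof -
  have "det A = (\<Sum>j<Suc n. A $$ (0, j) * cofactor A 0 j)"
    by (rule laplace_expansion_row[OF A]) simp
  also have "\<dots> = A $$ (0, 0) * cofactor A 0 0"
    by (subst sum.lessThan_Suc_shift) (simp add: zero)
  finally have "det A = A $$ (0, 0) * cofactor A 0 0" .
  moreover have "mat_delete A 0 0 = mat n n (\<lambda>(i, j). A $$ (Suc i, Suc j))"
    using A unfolding mat_delete_def by (intro eq_matI) auto
  ultimately show ?thesis unfolding cofactor_def by simp
qed

lemma det_mult_upper_unitriangular:
  fixes A U :: "'a :: comm_ring_1 mat"
  assumes A: "A \<in> carrier_mat n n" and U: "U \<in> carrier_mat n n"
    and diag: "\<And>i. i < n \<Longrightarrow> U $$ (i, i) = 1"
    and upper: "\<And>i j. j < i \<Longrightarrow> i < n \<Longrightarrow> U $$ (i, j) = 0"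
  shows "det (A * U) = det A"
proof -
  have "det U = prod_list (diag_mat U)"
    by (rule det_upper_triangular[OF _ U]) (use U upper in \<open>auto simp: upper_triangular_def\<close>)
  also have "\<dots> = 1"
    unfolding prod_list_diag_prod using U diag by (intro prod.neutral) auto
  finally show ?thesis using det_mult[OF A U] by simp
qed

definition vandermonde :: "nat \<Rightarrow> (nat \<Rightarrow> 'a :: comm_ring_1) \<Rightarrow> 'a" where
  "vandermonde n a = (\<Prod>j<n. \<Prod>i<j. a j - a i)"

lemma vandermonde_Suc:
  "vandermonde (Suc n) a = (\<Prod>j<n. a (Suc j) - a 0) * vandermonde n (\<lambda>j. a (Suc j))"
  unfolding vandermonde_def prod.lessThan_Suc_shift prod.distrib by simp

lemma vandermonde_nonzero:
  fixes a :: "nat \<Rightarrow> 'a :: idom"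
  assumes "inj_on a {..<n}"
  shows "vandermonde n a \<noteq> 0"
proof -
  have "a j - a i \<noteq> 0" if "i < j" "j < n" for i j
    using inj_onD[OF assms, of j i] that by auto
  then show ?thesis unfolding vandermonde_def by simp
qed

lemma det_vandermonde:
  fixes a :: "nat \<Rightarrow> 'a :: comm_ring_1"
  shows "det (mat n n (\<lambda>(k, j). a k ^ j)) = vandermonde n a"
proof (induction n arbitrary: a)
  case 0
  show ?case by (simp add: vandermonde_def)
next
  case (Suc n)
  define M where "M = mat (Suc n) (Suc n) (\<lambda>(k, j). a k ^ j)"
  define U where "U = mat (Suc n) (Suc n)
    (\<lambda>(i, j). if i = j then 1 else if j = Suc i then - a 0 else 0)"
  \<comment> \<open>column j minus a 0 times column j - 1\<close>
  have MU: "(M * U) $$ (k, j) = (if j = 0 then 1 else a k ^ j - a 0 * a k ^ (j - 1))"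
    if "k < Suc n" "j < Suc n" for k j
  proof -
    have "(M * U) $$ (k, j)
        = (\<Sum>m<Suc n. a k ^ m * (if m = j then 1 else if j = Suc m then - a 0 else 0))"
      unfolding M_def U_def using that by (subst index_mult_mat_mat) (auto intro!: sum.cong)
    also have "\<dots> = (\<Sum>m<Suc n. (if m = j then a k ^ m else 0)
        + (if j = Suc m then - a 0 * a k ^ m else 0))"
      by (intro sum.cong) auto
    also have "\<dots> = (if j = 0 then 1 else a k ^ j - a 0 * a k ^ (j - 1))"
      using that by (cases j) (auto simp: sum.distrib)
    finally show ?thesis .
  qed
  have "det M = det (M * U)"
    by (rule det_mult_upper_unitriangular[symmetric]) (auto simp: M_def U_def)
  also have "\<dots> = (M * U) $$ (0, 0) * det (mat n n (\<lambda>(i, j). (M * U) $$ (Suc i, Suc j)))"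
  proof (rule det_first_row_zero)
    show "M * U \<in> carrier_mat (Suc n) (Suc n)" unfolding M_def U_def by (rule mult_carrier_mat) auto
    show "(M * U) $$ (0, j) = 0" if "0 < j" "j < Suc n" for j
      using MU[of 0 j] that by (cases j) auto
  qed
  also have "mat n n (\<lambda>(i, j). (M * U) $$ (Suc i, Suc j))
      = mat n n (\<lambda>(i, j). (a (Suc i) - a 0) * a (Suc i) ^ j * 1)"
    by (rule eq_matI) (simp_all add: MU left_diff_distrib)
  finally show ?case
    using MU[of 0 0] det_mat_scaled[of n "\<lambda>i. a (Suc i) - a 0" "\<lambda>i j. a (Suc i) ^ j" "\<lambda>_. 1"]
      Suc.IH[of "\<lambda>i. a (Suc i)"]
    by (simp add: M_def vandermonde_Suc)
qed

lemma det_Suc_schur_complement: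
  fixes A :: "nat \<Rightarrow> nat \<Rightarrow> 'a :: field"
  assumes "A 0 0 \<noteq> 0"
  shows "det (mat (Suc n) (Suc n) (\<lambda>(i, j). A i j))
    = A 0 0 * det (mat n n (\<lambda>(i, j). A (Suc i) (Suc j) - A (Suc i) 0 * A 0 (Suc j) / A 0 0))"
proof -
  define M where "M = mat (Suc n) (Suc n) (\<lambda>(i, j). A i j)"
  define R where "R = mat (Suc n) (Suc n)
    (\<lambda>(i, j). if i = j then 1 else if i = 0 then - A 0 j / A 0 0 else 0)"
  have MR: "(M * R) $$ (i, j) = A i j - (if j = 0 then 0 else A i 0 * A 0 j / A 0 0)"
    if "i < Suc n" "j < Suc n" for i j
  proof -
    have "(M * R) $$ (i, j)
        = (\<Sum>m<Suc n. A i m * (if m = j then 1 else if m = 0 then - A 0 j / A 0 0 else 0))"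
      unfolding M_def R_def using that by (subst index_mult_mat_mat) (auto intro!: sum.cong)
    also have "\<dots> = (\<Sum>m<Suc n. (if m = j then A i m else 0)
        + (if m = 0 \<and> j \<noteq> 0 then - (A i m * A 0 j / A 0 0) else 0))"
      by (intro sum.cong) auto
    also have "\<dots> = A i j - (if j = 0 then 0 else A i 0 * A 0 j / A 0 0)"
      using that by (simp add: sum.distrib)
    finally show ?thesis .
  qed
  have "det M = det (M * R)"
    by (rule det_mult_upper_unitriangular[symmetric]) (auto simp: M_def R_def)
  also have "\<dots> = (M * R) $$ (0, 0) * det (mat n n (\<lambda>(i, j). (M * R) $$ (Suc i, Suc j)))"
  proof (rule det_first_row_zero)
    show "M * R \<in> carrier_mat (Suc n) (Suc n)" unfolding M_def R_def by (rule mult_carrier_mat) auto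
    show "(M * R) $$ (0, j) = 0" if "0 < j" "j < Suc n" for j
      using MR[of 0 j] that assms by simp
  qed
  also have "mat n n (\<lambda>(i, j). (M * R) $$ (Suc i, Suc j))
      = mat n n (\<lambda>(i, j). A (Suc i) (Suc j) - A (Suc i) 0 * A 0 (Suc j) / A 0 0)"
    by (rule eq_matI) (simp_all add: MR)
  finally show ?thesis using MR[of 0 0] by (simp add: M_def)
qed

lemma prod_lessThan_Suc_square:
  "(\<Prod>i<Suc n. \<Prod>j<Suc n. f i j) = f 0 0 * (\<Prod>j<n. f 0 (Suc j)) * (\<Prod>i<n. f (Suc i) 0)
     * (\<Prod>i<n. \<Prod>j<n. f (Suc i) (Suc j))"
  unfolding prod.lessThan_Suc_shift prod.distrib by (simp add: mult_ac)

lemma det_cauchy: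
  fixes a b :: "nat \<Rightarrow> 'a :: field"
  assumes "\<And>i j. i < n \<Longrightarrow> j < n \<Longrightarrow> a i + b j \<noteq> 0"
  shows "det (mat n n (\<lambda>(i, j). 1 / (a i + b j)))
    = vandermonde n a * vandermonde n b * (\<Prod>i<n. \<Prod>j<n. 1 / (a i + b j))"
  using assms
proof (induction n arbitrary: a b)
  case 0
  show ?case by (simp add: vandermonde_def)
next
  case (Suc n)
  have nz: "a i + b j \<noteq> 0" if "i < Suc n" "j < Suc n" for i j
    using Suc.prems that .
  define c where "c i = (a (Suc i) - a 0) / (a (Suc i) + b 0)" for i
  define d where "d j = (b (Suc j) - b 0) / (a 0 + b (Suc j))" for j
  have schur: "1 / (a (Suc i) + b (Suc j))
      - 1 / (a (Suc i) + b 0) * (1 / (a 0 + b (Suc j))) / (1 / (a 0 + b 0))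
      = c i * (1 / (a (Suc i) + b (Suc j))) * d j" if "i < n" "j < n" for i j
    using nz[of "Suc i" "Suc j"] nz[of "Suc i" 0] nz[of 0 "Suc j"] nz[of 0 0] that
    unfolding c_def d_def by (simp add: divide_simps) (simp add: algebra_simps)
  have "det (mat (Suc n) (Suc n) (\<lambda>(i, j). 1 / (a i + b j)))
      = 1 / (a 0 + b 0) * det (mat n n (\<lambda>(i, j). 1 / (a (Suc i) + b (Suc j))
          - 1 / (a (Suc i) + b 0) * (1 / (a 0 + b (Suc j))) / (1 / (a 0 + b 0))))"
    using det_Suc_schur_complement[of "\<lambda>i j. 1 / (a i + b j)" n] nz[of 0 0] by simp
  also have "mat n n (\<lambda>(i, j). 1 / (a (Suc i) + b (Suc j))
          - 1 / (a (Suc i) + b 0) * (1 / (a 0 + b (Suc j))) / (1 / (a 0 + b 0)))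
      = mat n n (\<lambda>(i, j). c i * (1 / (a (Suc i) + b (Suc j))) * d j)"
    using schur by (intro eq_matI) auto
  also have "1 / (a 0 + b 0) * det (mat n n (\<lambda>(i, j). c i * (1 / (a (Suc i) + b (Suc j))) * d j))
      = 1 / (a 0 + b 0) * (\<Prod>i<n. c i) * (\<Prod>j<n. d j)
      * (vandermonde n (\<lambda>i. a (Suc i)) * vandermonde n (\<lambda>j. b (Suc j))
         * (\<Prod>i<n. \<Prod>j<n. 1 / (a (Suc i) + b (Suc j))))"
    using det_mat_scaled[of n c "\<lambda>i j. 1 / (a (Suc i) + b (Suc j))" d]
      Suc.IH[of "\<lambda>i. a (Suc i)" "\<lambda>j. b (Suc j)"] nz by simp
  also have "\<dots> = vandermonde (Suc n) a * vandermonde (Suc n) b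
      * (\<Prod>i<Suc n. \<Prod>j<Suc n. 1 / (a i + b j))"
    unfolding vandermonde_Suc prod_lessThan_Suc_square c_def d_def
    by (simp add: prod.distrib prod_dividef mult_ac)
  finally show ?case .
qed

section \<open>Andreief's identity\<close>

definition eval_det :: "nat \<Rightarrow> (nat \<Rightarrow> 'a \<Rightarrow> real) \<Rightarrow> (nat \<Rightarrow> 'a) \<Rightarrow> real" where
  "eval_det n \<phi> X = det (mat n n (\<lambda>(k, i). \<phi> i (X k)))"

lemma eval_det_leibniz:
  "eval_det n \<phi> X = (\<Sum>p\<in>{p. p permutes {..<n}}. signof p * (\<Prod>k<n. \<phi> (p k) (X k)))"
  unfolding eval_det_def by (subst det_def'[of _ n]) (auto simp: atLeast0LessThan)

lemma eval_det_leibniz_transpose: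
  "eval_det n \<phi> X = (\<Sum>p\<in>{p. p permutes {..<n}}. signof p * (\<Prod>i<n. \<phi> i (X (p i))))"
proof -
  have "eval_det n \<phi> X = det (transpose_mat (mat n n (\<lambda>(k, i). \<phi> i (X k))))"
    unfolding eval_det_def by (subst det_transpose[of _ n]) auto
  also have "transpose_mat (mat n n (\<lambda>(k, i). \<phi> i (X k))) = mat n n (\<lambda>(i, k). \<phi> i (X k))"
    by (rule eq_matI) auto
  also have "det \<dots> = (\<Sum>p\<in>{p. p permutes {..<n}}. signof p * (\<Prod>i<n. \<phi> i (X (p i))))"
    by (subst det_def'[of _ n]) (auto simp: atLeast0LessThan)
  finally show ?thesis .
qed

lemma eval_det_permute_points:
  assumes "\<pi> permutes {..<n}"
  shows "eval_det n \<phi> (\<lambda>k. X (\<pi> k)) = signof \<pi> * eval_det n \<phi> X"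
proof -
  have \<pi>: "\<pi> permutes {0..<n}" using assms by (simp add: atLeast0LessThan)
  have "eval_det n \<phi> (\<lambda>k. X (\<pi> k))
      = det (mat n n (\<lambda>(k, i). mat n n (\<lambda>(k, i). \<phi> i (X k)) $$ (\<pi> k, i)))"
    unfolding eval_det_def using permutes_in_image[OF \<pi>]
    by (intro arg_cong[where f = det] eq_matI) auto
  also have "\<dots> = signof \<pi> * eval_det n \<phi> X"
    unfolding eval_det_def by (rule det_permute_rows[OF _ \<pi>]) auto
  finally show ?thesis .
qed

lemma eval_det_eq_0_if_not_inj:
  assumes "\<not> inj_on X {..<n}"
  shows "eval_det n \<phi> X = 0"
proof -
  obtain i j where "i < n" "j < n" "i \<noteq> j" "X i = X j"
    using assms by (auto simp: inj_on_def)
  then show ?thesis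
    unfolding eval_det_def by (intro det_identical_rows[of _ n i j]) (auto intro!: eq_vecI)
qed

lemma eval_det_abs_le:
  assumes "\<And>i k. i < n \<Longrightarrow> k < n \<Longrightarrow> \<bar>\<phi> i (X k)\<bar> \<le> B"
  shows "\<bar>eval_det n \<phi> X\<bar> \<le> fact n * B ^ n"
proof -
  have "\<bar>eval_det n \<phi> X\<bar> \<le> (\<Sum>p\<in>{p. p permutes {..<n}}. \<bar>signof p * (\<Prod>k<n. \<phi> (p k) (X k))\<bar>)"
    unfolding eval_det_leibniz by (rule sum_abs)
  also have "\<dots> \<le> (\<Sum>p\<in>{p. p permutes {..<n}}. B ^ n)"
  proof (rule sum_mono)
    fix p assume "p \<in> {p. p permutes {..<n}}"
    then have "\<bar>\<phi> (p k) (X k)\<bar> \<le> B" if "k \<in> {..<n}" for k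
      using assms permutes_in_image that by fastforce
    then have "(\<Prod>k<n. \<bar>\<phi> (p k) (X k)\<bar>) \<le> (\<Prod>k<n. B)"
      by (intro prod_mono) auto
    then show "\<bar>signof p * (\<Prod>k<n. \<phi> (p k) (X k))\<bar> \<le> B ^ n"
      by (simp add: abs_mult sign_def abs_prod)
  qed
  also have "\<dots> = fact n * B ^ n"
    using card_permutations[of "{..<n}" n] by simp
  finally show ?thesis .
qed

lemma borel_measurable_prod_components:
  fixes \<phi> :: "nat \<Rightarrow> 'a \<Rightarrow> real"
  assumes "\<And>i. i < n \<Longrightarrow> \<phi> i \<in> borel_measurable M" "\<And>i. i < n \<Longrightarrow> q i < n"
  shows "(\<lambda>X. \<Prod>i<n. \<phi> i (X (q i))) \<in> borel_measurable (Pi\<^sub>M {..<n} (\<lambda>_. M))"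
proof (intro borel_measurable_prod)
  fix i assume "i \<in> {..<n}"
  then show "(\<lambda>X. \<phi> i (X (q i))) \<in> borel_measurable (Pi\<^sub>M {..<n} (\<lambda>_. M))"
    using measurable_compose[OF measurable_component_singleton[of "q i" "{..<n}" "\<lambda>_. M"] assms(1)]
      assms(2) by simp
qed

lemma borel_measurable_eval_det:
  assumes "\<And>i. i < n \<Longrightarrow> \<phi> i \<in> borel_measurable M"
  shows "eval_det n \<phi> \<in> borel_measurable (Pi\<^sub>M {..<n} (\<lambda>_. M))"
proof -
  have "(\<lambda>X. \<Sum>p\<in>{p. p permutes {..<n}}. signof p * (\<Prod>i<n. \<phi> i (X (p i))))
      \<in> borel_measurable (Pi\<^sub>M {..<n} (\<lambda>_. M))"
    using assms permutes_in_image
    by (intro borel_measurable_sum borel_measurable_times borel_measurable_const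
        borel_measurable_prod_components) fastforce+
  then show ?thesis unfolding eval_det_leibniz_transpose[abs_def] .
qed

lemma integral_PiM_permute:
  fixes F :: "(nat \<Rightarrow> 'a) \<Rightarrow> real"
  assumes M: "prob_space M" and \<pi>: "\<pi> permutes {..<n}"
    and F: "F \<in> borel_measurable (Pi\<^sub>M {..<n} (\<lambda>_. M))"
  shows "(\<integral>X. F (\<lambda>k. X (\<pi> k)) \<partial>Pi\<^sub>M {..<n} (\<lambda>_. M)) = (\<integral>X. F X \<partial>Pi\<^sub>M {..<n} (\<lambda>_. M))"
proof -
  let ?P = "Pi\<^sub>M {..<n} (\<lambda>_. M)"
  define T :: "(nat \<Rightarrow> 'a) \<Rightarrow> nat \<Rightarrow> 'a" where "T = (\<lambda>X. \<lambda>k\<in>{..<n}. X (\<pi> k))"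
  have \<pi>_in: "\<pi> \<in> {..<n} \<rightarrow> {..<n}"
    using permutes_in_image[OF \<pi>] by auto
  have T: "T \<in> measurable ?P ?P"
    unfolding T_def
    by (rule measurable_restrict) (use \<pi>_in in \<open>auto intro!: measurable_component_singleton\<close>)
  have "distr ?P ?P T = ?P"
    using distr_PiM_reindex[OF M permutes_inj_on[OF \<pi>] \<pi>_in] unfolding T_def .
  then have "(\<integral>X. F X \<partial>?P) = (\<integral>X. F (T X) \<partial>?P)"
    using integral_distr[OF T F] by simp
  also have "\<dots> = (\<integral>X. F (\<lambda>k. X (\<pi> k)) \<partial>?P)"
  proof (rule Bochner_Integration.integral_cong[OF refl])
    fix X assume "X \<in> space ?P"
    then have "T X = (\<lambda>k. X (\<pi> k))"
      using permutes_not_in[OF \<pi>] by (auto simp: T_def space_PiM PiE_def extensional_def)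
    then show "F (T X) = F (\<lambda>k. X (\<pi> k))" by simp
  qed
  finally show ?thesis by simp
qed

lemma det_integral_eq_integral_diag:
  fixes M :: "'a measure" and \<phi> \<psi> :: "nat \<Rightarrow> 'a \<Rightarrow> real"
  assumes M: "prob_space M"
    and \<phi>: "\<And>i. i < n \<Longrightarrow> \<phi> i \<in> borel_measurable M"
    and \<psi>: "\<And>i. i < n \<Longrightarrow> \<psi> i \<in> borel_measurable M"
    and \<phi>_le: "\<And>i x. i < n \<Longrightarrow> x \<in> space M \<Longrightarrow> \<bar>\<phi> i x\<bar> \<le> B"
    and \<psi>_le: "\<And>i x. i < n \<Longrightarrow> x \<in> space M \<Longrightarrow> \<bar>\<psi> i x\<bar> \<le> B"
  shows "det (mat n n (\<lambda>(i, j). \<integral>x. \<phi> i x * \<psi> j x \<partial>M))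
    = (\<integral>X. (\<Prod>i<n. \<phi> i (X i)) * eval_det n \<psi> X \<partial>Pi\<^sub>M {..<n} (\<lambda>_. M))"
proof -
  interpret M: prob_space M by (rule M)
  let ?P = "Pi\<^sub>M {..<n} (\<lambda>_. M)"
  interpret P: prob_space ?P by (rule prob_space_PiM) (rule M)
  interpret PS: product_sigma_finite "\<lambda>_. M" by unfold_locales
  have p_lt: "p i < n" if "p permutes {..<n}" "i < n" for p i
    using permutes_in_image[OF that(1)] that(2) by simp
  have \<phi>\<psi>_le: "\<bar>\<phi> i x * \<psi> j x\<bar> \<le> B * B" if "i < n" "j < n" "x \<in> space M" for i j x
    using \<phi>_le[OF that(1,3)] \<psi>_le[OF that(2,3)] unfolding abs_mult by (intro mult_mono) auto
  have term_eq: "(\<Prod>i<n. \<integral>x. \<phi> i x * \<psi> (p i) x \<partial>M)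
      = (\<integral>X. (\<Prod>i<n. \<phi> i (X i) * \<psi> (p i) (X i)) \<partial>?P)" if p: "p permutes {..<n}" for p
  proof (rule PS.product_integral_prod[symmetric])
    fix i assume "i \<in> {..<n}"
    then have i: "i < n" "p i < n" using p_lt[OF p] by auto
    show "integrable M (\<lambda>x. \<phi> i x * \<psi> (p i) x)"
    proof (rule M.integrable_const_bound[where B = "B * B"])
      show "AE x in M. norm (\<phi> i x * \<psi> (p i) x) \<le> B * B"
        by (intro AE_I2) (simp add: \<phi>\<psi>_le i)
    qed (use \<phi> \<psi> i in auto)
  qed simp
  have term_integrable: "integrable ?P (\<lambda>X. signof p * (\<Prod>i<n. \<phi> i (X i) * \<psi> (p i) (X i)))"
    if p: "p permutes {..<n}" for p
  proof (rule P.integrable_const_bound[where B = "(B * B) ^ n"])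
    show "(\<lambda>X. signof p * (\<Prod>i<n. \<phi> i (X i) * \<psi> (p i) (X i))) \<in> borel_measurable ?P"
      using \<phi> \<psi> p_lt[OF p]
      by (intro borel_measurable_times borel_measurable_const borel_measurable_prod_components) auto
    show "AE X in ?P. norm (signof p * (\<Prod>i<n. \<phi> i (X i) * \<psi> (p i) (X i))) \<le> (B * B) ^ n"
    proof (rule AE_I2)
      fix X assume "X \<in> space ?P"
      then have "(\<Prod>i<n. \<bar>\<phi> i (X i) * \<psi> (p i) (X i)\<bar>) \<le> (\<Prod>i<n. B * B)"
        using \<phi>\<psi>_le p_lt[OF p] by (intro prod_mono) (auto simp: space_PiM PiE_iff)
      then show "norm (signof p * (\<Prod>i<n. \<phi> i (X i) * \<psi> (p i) (X i))) \<le> (B * B) ^ n"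
        by (simp add: abs_mult sign_def abs_prod)
    qed
  qed
  have "det (mat n n (\<lambda>(i, j). \<integral>x. \<phi> i x * \<psi> j x \<partial>M))
      = (\<Sum>p\<in>{p. p permutes {..<n}}. signof p * (\<Prod>i<n. \<integral>x. \<phi> i x * \<psi> (p i) x \<partial>M))"
    using p_lt by (subst det_def'[of _ n]) (auto simp: atLeast0LessThan intro!: sum.cong prod.cong)
  also have "\<dots> = (\<Sum>p\<in>{p. p permutes {..<n}}.
      \<integral>X. signof p * (\<Prod>i<n. \<phi> i (X i) * \<psi> (p i) (X i)) \<partial>?P)"
    by (intro sum.cong) (simp_all add: term_eq)
  also have "\<dots> = (\<integral>X. (\<Sum>p\<in>{p. p permutes {..<n}}.
      signof p * (\<Prod>i<n. \<phi> i (X i) * \<psi> (p i) (X i))) \<partial>?P)"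
    by (rule Bochner_Integration.integral_sum[symmetric]) (rule term_integrable, simp)
  also have "\<dots> = (\<integral>X. (\<Prod>i<n. \<phi> i (X i)) * eval_det n \<psi> X \<partial>?P)"
    by (simp add: eval_det_leibniz sum_distrib_left prod.distrib mult_ac)
  finally show ?thesis .
qed

lemma andreief:
  fixes M :: "'a measure" and \<phi> \<psi> :: "nat \<Rightarrow> 'a \<Rightarrow> real"
  assumes M: "prob_space M"
    and \<phi>: "\<And>i. i < n \<Longrightarrow> \<phi> i \<in> borel_measurable M"
    and \<psi>: "\<And>i. i < n \<Longrightarrow> \<psi> i \<in> borel_measurable M"
    and \<phi>_le: "\<And>i x. i < n \<Longrightarrow> x \<in> space M \<Longrightarrow> \<bar>\<phi> i x\<bar> \<le> B"
    and \<psi>_le: "\<And>i x. i < n \<Longrightarrow> x \<in> space M \<Longrightarrow> \<bar>\<psi> i x\<bar> \<le> B"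
  shows "fact n * det (mat n n (\<lambda>(i, j). \<integral>x. \<phi> i x * \<psi> j x \<partial>M))
    = (\<integral>X. eval_det n \<phi> X * eval_det n \<psi> X \<partial>Pi\<^sub>M {..<n} (\<lambda>_. M))"
proof -
  let ?P = "Pi\<^sub>M {..<n} (\<lambda>_. M)"
  interpret P: prob_space ?P by (rule prob_space_PiM) (rule M)
  define G where "G q X = (\<Prod>i<n. \<phi> i (X (q i))) * eval_det n \<psi> X" for q X
  have p_lt: "p i < n" if "p permutes {..<n}" "i < n" for p i
    using permutes_in_image[OF that(1)] that(2) by simp
  have G_measurable: "G q \<in> borel_measurable ?P" if "\<And>i. i < n \<Longrightarrow> q i < n" for q
    unfolding G_def using \<phi> \<psi> that
    by (intro borel_measurable_times borel_measurable_prod_components borel_measurable_eval_det)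
  have G_integrable: "integrable ?P (\<lambda>X. signof p * G p X)" if p: "p permutes {..<n}" for p
  proof (rule P.integrable_const_bound[where B = "\<bar>B\<bar> ^ n * (fact n * \<bar>B\<bar> ^ n)"])
    show "(\<lambda>X. signof p * G p X) \<in> borel_measurable ?P"
      using G_measurable p_lt[OF p] by measurable
    show "AE X in ?P. norm (signof p * G p X) \<le> \<bar>B\<bar> ^ n * (fact n * \<bar>B\<bar> ^ n)"
    proof (rule AE_I2)
      fix X assume "X \<in> space ?P"
      then have X: "X k \<in> space M" if "k < n" for k
        using that by (auto simp: space_PiM PiE_iff)
      have "(\<Prod>i<n. \<bar>\<phi> i (X (p i))\<bar>) \<le> (\<Prod>i<n. \<bar>B\<bar>)"
        using \<phi>_le X p_lt[OF p] by (intro prod_mono) force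
      moreover have "\<bar>eval_det n \<psi> X\<bar> \<le> fact n * \<bar>B\<bar> ^ n"
        using \<psi>_le X by (intro eval_det_abs_le) force
      ultimately show "norm (signof p * G p X) \<le> \<bar>B\<bar> ^ n * (fact n * \<bar>B\<bar> ^ n)"
        unfolding G_def by (simp add: abs_mult sign_def abs_prod mult_mono)
    qed
  qed
  \<comment> \<open>relabelling the integration variables by \<pi> moves the permutation from \<psi> to \<phi>\<close>
  have relabel: "(\<integral>X. G id X \<partial>?P) = (\<integral>X. signof \<pi> * G \<pi> X \<partial>?P)" if \<pi>: "\<pi> permutes {..<n}" for \<pi>
  proof -
    have "(\<integral>X. G id X \<partial>?P) = (\<integral>X. G id (\<lambda>k. X (\<pi> k)) \<partial>?P)"
      by (rule integral_PiM_permute[OF M \<pi>, symmetric]) (rule G_measurable, simp)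
    also have "\<dots> = (\<integral>X. signof \<pi> * G \<pi> X \<partial>?P)"
      unfolding G_def eval_det_permute_points[OF \<pi>] by (simp add: mult_ac)
    finally show ?thesis .
  qed
  have "fact n * (\<integral>X. G id X \<partial>?P) = (\<Sum>\<pi>\<in>{p. p permutes {..<n}}. \<integral>X. G id X \<partial>?P)"
    using card_permutations[of "{..<n}" n] by simp
  also have "\<dots> = (\<Sum>\<pi>\<in>{p. p permutes {..<n}}. \<integral>X. signof \<pi> * G \<pi> X \<partial>?P)"
    using relabel by (intro sum.cong) auto
  also have "\<dots> = (\<integral>X. (\<Sum>\<pi>\<in>{p. p permutes {..<n}}. signof \<pi> * G \<pi> X) \<partial>?P)"
    by (rule Bochner_Integration.integral_sum[symmetric]) (rule G_integrable, simp)
  also have "\<dots> = (\<integral>X. eval_det n \<phi> X * eval_det n \<psi> X \<partial>?P)"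
    by (simp add: G_def eval_det_leibniz_transpose[of n \<phi>] sum_distrib_right mult.assoc)
  finally show ?thesis
    using det_integral_eq_integral_diag[OF assms] by (simp add: G_def)
qed

lemma integrable_eval_det_mult:
  fixes M :: "'a measure" and \<phi> \<psi> :: "nat \<Rightarrow> 'a \<Rightarrow> real"
  assumes M: "prob_space M"
    and \<phi>: "\<And>i. i < n \<Longrightarrow> \<phi> i \<in> borel_measurable M"
    and \<psi>: "\<And>i. i < n \<Longrightarrow> \<psi> i \<in> borel_measurable M"
    and \<phi>_le: "\<And>i x. i < n \<Longrightarrow> x \<in> space M \<Longrightarrow> \<bar>\<phi> i x\<bar> \<le> B"
    and \<psi>_le: "\<And>i x. i < n \<Longrightarrow> x \<in> space M \<Longrightarrow> \<bar>\<psi> i x\<bar> \<le> B"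
  shows "integrable (Pi\<^sub>M {..<n} (\<lambda>_. M)) (\<lambda>X. eval_det n \<phi> X * eval_det n \<psi> X)"
proof -
  let ?P = "Pi\<^sub>M {..<n} (\<lambda>_. M)"
  interpret P: prob_space ?P by (rule prob_space_PiM) (rule M)
  show ?thesis
  proof (rule P.integrable_const_bound[where B = "(fact n * B ^ n) * (fact n * B ^ n)"])
    show "(\<lambda>X. eval_det n \<phi> X * eval_det n \<psi> X) \<in> borel_measurable ?P"
      using \<phi> \<psi> by (intro borel_measurable_times borel_measurable_eval_det)
    show "AE X in ?P. norm (eval_det n \<phi> X * eval_det n \<psi> X) \<le> (fact n * B ^ n) * (fact n * B ^ n)"
    proof (rule AE_I2)
      fix X assume "X \<in> space ?P"
      then have X: "X k \<in> space M" if "k < n" for k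
        using that by (auto simp: space_PiM PiE_iff)
      have "\<bar>eval_det n \<phi> X\<bar> \<le> fact n * B ^ n" "\<bar>eval_det n \<psi> X\<bar> \<le> fact n * B ^ n"
        using \<phi>_le \<psi>_le X by (intro eval_det_abs_le; force)+
      then show "norm (eval_det n \<phi> X * eval_det n \<psi> X) \<le> (fact n * B ^ n) * (fact n * B ^ n)"
        by (simp add: abs_mult mult_mono)
    qed
  qed
qed

section \<open>Positivity of the moment determinants\<close>

abbreviation lborel01 :: "real measure" where
  "lborel01 \<equiv> restrict_space lborel {0<..<1}"

lemma prob_space_lborel01: "prob_space lborel01"
  by (rule prob_space_restrict_space) auto

lemma space_lborel01 [simp]: "space lborel01 = {0<..<1}"
  by (simp add: space_restrict_space)

lemma space_PiM_lborel01D: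
  "X \<in> space (Pi\<^sub>M {..<n} (\<lambda>_. lborel01)) \<Longrightarrow> k < n \<Longrightarrow> 0 < X k \<and> X k < 1"
  by (auto simp: space_PiM PiE_iff)

lemma PiM_lborel01_injective_box:
  fixes n :: nat
  obtains Bx where "Bx \<subseteq> space (Pi\<^sub>M {..<n} (\<lambda>_. lborel01))"
    and "emeasure (Pi\<^sub>M {..<n} (\<lambda>_. lborel01)) Bx \<noteq> 0"
    and "\<And>X. X \<in> Bx \<Longrightarrow> inj_on X {..<n}"
proof
  interpret PS: product_sigma_finite "\<lambda>_. lborel01"
    using prob_space_lborel01 by (simp add: product_sigma_finite_def prob_space_imp_sigma_finite)
  define I where "I k = {real k / real (Suc n) <..< (real k + 1) / real (Suc n)}" for k
  have I_sub: "I k \<subseteq> {0<..<1}" if "k < n" for k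
  proof
    fix x assume "x \<in> I k"
    then have "real k / real (Suc n) < x" "x < (real k + 1) / real (Suc n)"
      by (auto simp: I_def)
    moreover have "0 \<le> real k / real (Suc n)" "(real k + 1) / real (Suc n) \<le> 1"
      using that by (simp_all add: field_simps)
    ultimately have "0 < x" "x < 1" by linarith+
    then show "x \<in> {0<..<1}" by simp
  qed
  show "Pi\<^sub>E {..<n} I \<subseteq> space (Pi\<^sub>M {..<n} (\<lambda>_. lborel01))"
    using I_sub by (auto simp: space_PiM PiE_iff)
  have I_sets: "I k \<in> sets lborel01" if "k < n" for k
    using I_sub[OF that] by (simp add: I_def sets_restrict_space_iff)
  have I_measure: "emeasure lborel01 (I k) = ennreal (1 / real (Suc n))" if "k < n" for k
  proof -
    have "emeasure lborel01 (I k) = emeasure lborel (I k)"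
      by (rule emeasure_restrict_space) (use I_sub[OF that] in \<open>auto simp: I_def\<close>)
    also have "\<dots> = ennreal ((real k + 1) / real (Suc n) - real k / real (Suc n))"
      unfolding I_def by (rule emeasure_lborel_Ioo) (simp add: divide_right_mono)
    finally show ?thesis by (simp add: field_simps)
  qed
  have "emeasure (Pi\<^sub>M {..<n} (\<lambda>_. lborel01)) (Pi\<^sub>E {..<n} I)
      = (\<Prod>k<n. emeasure lborel01 (I k))"
    by (rule PS.emeasure_PiM) (auto intro: I_sets)
  also have "\<dots> = (\<Prod>k<n. ennreal (1 / real (Suc n)))"
    by (rule prod.cong) (auto simp: I_measure)
  finally show "emeasure (Pi\<^sub>M {..<n} (\<lambda>_. lborel01)) (Pi\<^sub>E {..<n} I) \<noteq> 0"
    by (simp add: prod_ennreal[symmetric])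
  show "inj_on X {..<n}" if X: "X \<in> Pi\<^sub>E {..<n} I" for X
  proof (rule inj_onI)
    fix i j assume ij: "i \<in> {..<n}" "j \<in> {..<n}" and eq: "X i = X j"
    have "X i \<in> I i" "X j \<in> I j"
      using X ij by (auto simp: PiE_iff)
    with eq have "real i / real (Suc n) < (real j + 1) / real (Suc n)"
      "real j / real (Suc n) < (real i + 1) / real (Suc n)"
      by (auto simp: I_def)
    then have "real i < real j + 1" "real j < real i + 1"
      by (simp_all add: divide_less_cancel)
    then show "i = j" by linarith
  qed
qed

lemma integral_PiM_lborel01_pos:
  fixes F :: "(nat \<Rightarrow> real) \<Rightarrow> real"
  assumes F: "integrable (Pi\<^sub>M {..<n} (\<lambda>_. lborel01)) F"
    and nonneg: "\<And>X. X \<in> space (Pi\<^sub>M {..<n} (\<lambda>_. lborel01)) \<Longrightarrow> 0 \<le> F X"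
    and pos: "\<And>X. X \<in> space (Pi\<^sub>M {..<n} (\<lambda>_. lborel01)) \<Longrightarrow> inj_on X {..<n} \<Longrightarrow> 0 < F X"
  shows "0 < (\<integral>X. F X \<partial>Pi\<^sub>M {..<n} (\<lambda>_. lborel01))"
proof -
  let ?P = "Pi\<^sub>M {..<n} (\<lambda>_. lborel01)"
  obtain Bx where Bx: "Bx \<subseteq> space ?P" "emeasure ?P Bx \<noteq> 0" "\<And>X. X \<in> Bx \<Longrightarrow> inj_on X {..<n}"
    using PiM_lborel01_injective_box[of n] by blast
  have "(\<integral>X. F X \<partial>?P) \<noteq> 0"
  proof
    assume "(\<integral>X. F X \<partial>?P) = 0"
    then have "AE X in ?P. F X = 0"
      using integral_nonneg_eq_0_iff_AE[OF F] nonneg by auto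
    then have "AE X in ?P. X \<notin> Bx"
      by (rule AE_mp[OF _ AE_I2]) (use pos Bx(3) in force)
    then have "emeasure ?P {X \<in> space ?P. X \<in> Bx} = 0"
      by (rule emeasure_eq_0_AE)
    moreover have "{X \<in> space ?P. X \<in> Bx} = Bx" using Bx(1) by auto
    ultimately show False using Bx(2) by simp
  qed
  moreover have "0 \<le> (\<integral>X. F X \<partial>?P)"
    using nonneg by (rule Bochner_Integration.integral_nonneg)
  ultimately show ?thesis by simp
qed

definition weight :: "nat \<Rightarrow> real \<Rightarrow> real" where
  "weight t x = ((1 - x) / (1 + x)) ^ t"

definition weighted_monomial :: "nat \<Rightarrow> nat \<Rightarrow> nat \<Rightarrow> real \<Rightarrow> real" where
  "weighted_monomial p t i x = x ^ (p + i) * weight t x"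

definition kernel_moment :: "nat \<Rightarrow> nat \<Rightarrow> nat \<Rightarrow> real \<Rightarrow> real" where
  "kernel_moment s t j x = (\<integral>y. weighted_monomial (Suc s) t j y / (x + y) \<partial>lborel01)"

lemma borel_measurable_weighted_monomial [measurable]:
  "weighted_monomial p t i \<in> borel_measurable borel"
  unfolding weighted_monomial_def weight_def by measurable

lemma borel_measurable_lborel01:
  "f \<in> borel_measurable borel \<Longrightarrow> f \<in> borel_measurable lborel01"
  by (rule measurable_restrict_space1) simp

lemma borel_measurable_pair_lborel01:
  assumes "H \<in> borel_measurable (borel \<Otimes>\<^sub>M borel)"
  shows "H \<in> borel_measurable (lborel01 \<Otimes>\<^sub>M lborel01)"
proof -
  have "(\<lambda>p. (fst p, snd p)) \<in> measurable (lborel01 \<Otimes>\<^sub>M lborel01) (borel \<Otimes>\<^sub>M borel)"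
    by (intro measurable_Pair measurable_compose[OF measurable_fst borel_measurable_lborel01]
        measurable_compose[OF measurable_snd borel_measurable_lborel01]) simp_all
  from measurable_compose[OF this assms] show ?thesis by simp
qed

lemma weighted_monomial_shift: "weighted_monomial p t (a + i) = weighted_monomial (p + a) t i"
  by (rule ext) (simp add: weighted_monomial_def add.assoc)

lemma weight_pos: "0 < x \<Longrightarrow> x < 1 \<Longrightarrow> 0 < weight t x"
  by (simp add: weight_def)

lemma weighted_monomial_pos: "0 < x \<Longrightarrow> x < 1 \<Longrightarrow> 0 < weighted_monomial p t i x"
  by (simp add: weighted_monomial_def weight_pos)

lemma weighted_monomial_le_power:
  assumes "0 < x" "x < 1"
  shows "weighted_monomial p t i x \<le> x ^ (p + i)"
proof -
  have "weight t x \<le> 1"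
    unfolding weight_def using assms by (intro power_le_one) (auto simp: field_simps)
  then show ?thesis
    unfolding weighted_monomial_def using assms by (simp add: mult_left_le)
qed

lemma weighted_monomial_le_1:
  assumes "0 < x" "x < 1"
  shows "\<bar>weighted_monomial p t i x\<bar> \<le> 1"
proof -
  have "weighted_monomial p t i x \<le> x ^ (p + i)"
    by (rule weighted_monomial_le_power[OF assms])
  also have "\<dots> \<le> 1"
    using assms by (simp add: power_le_one)
  finally show ?thesis
    using weighted_monomial_pos[OF assms, of p t i] by simp
qed

lemma kernel_le_1:
  assumes "0 < x" "x < 1" "0 < y" "y < 1"
  shows "\<bar>weighted_monomial (Suc s) t j y / (x + y)\<bar> \<le> 1"
proof -
  have "weighted_monomial (Suc s) t j y \<le> y ^ Suc (s + j)"
    using weighted_monomial_le_power[OF assms(3,4), of "Suc s" t j] by simp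
  also have "\<dots> \<le> y"
    using assms(3,4) by (simp add: power_le_one mult_left_le)
  finally have "weighted_monomial (Suc s) t j y \<le> x + y"
    using assms(1) by linarith
  then show ?thesis
    using weighted_monomial_pos[OF assms(3,4), of "Suc s" t j] assms(1,3) by simp
qed

lemma integrable_kernel:
  assumes "0 < x" "x < 1"
  shows "integrable lborel01 (\<lambda>y. weighted_monomial (Suc s) t j y / (x + y))"
proof -
  interpret prob_space lborel01 by (rule prob_space_lborel01)
  show ?thesis
    using kernel_le_1[OF assms]
    by (intro integrable_const_bound[where B = 1] AE_I2 borel_measurable_lborel01) auto
qed

lemma borel_measurable_kernel_moment: "kernel_moment s t j \<in> borel_measurable lborel01"
proof -
  interpret prob_space lborel01 by (rule prob_space_lborel01)
  have "(\<lambda>(x, y). weighted_monomial (Suc s) t j y / (x + y))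
      \<in> borel_measurable (lborel01 \<Otimes>\<^sub>M lborel01)"
    by (rule borel_measurable_pair_lborel01) measurable
  then show ?thesis unfolding kernel_moment_def by (rule borel_measurable_lebesgue_integral)
qed

lemma kernel_moment_le_1: "0 < x \<Longrightarrow> x < 1 \<Longrightarrow> \<bar>kernel_moment s t j x\<bar> \<le> 1"
proof -
  assume x: "0 < x" "x < 1"
  interpret prob_space lborel01 by (rule prob_space_lborel01)
  have "\<bar>kernel_moment s t j x\<bar> \<le> (\<integral>y. 1 \<partial>lborel01)"
    unfolding kernel_moment_def
    by (rule integral_abs_bound_integral) (use integrable_kernel[OF x] kernel_le_1[OF x] in auto)
  then show ?thesis using prob_space by simp
qed

lemma mom_Suc_eq_integral_kernel_moment:
  "mom s t i (Suc j) = (\<integral>x. weighted_monomial s t i x * kernel_moment s t j x \<partial>lborel01)"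
proof -
  define S where "S = {0<..<(1::real)}"
  define G where "G x y = weighted_monomial s t i x * (weighted_monomial (Suc s) t j y / (x + y))"
    for x y :: real
  have G_bound: "\<bar>G x y\<bar> \<le> 1" if "x \<in> S" "y \<in> S" for x y
    using that weighted_monomial_le_1[of x s t i] kernel_le_1[of x y s t j]
    unfolding G_def S_def abs_mult by (intro mult_le_one) auto
  have integrable_G: "integrable (lborel \<Otimes>\<^sub>M lborel) (\<lambda>p. indicator (S \<times> S) p * G (fst p) (snd p))"
  proof (rule Bochner_Integration.integrable_bound
      [where f = "indicator (S \<times> S) :: real \<times> real \<Rightarrow> real"])
    have "emeasure (lborel \<Otimes>\<^sub>M lborel) (S \<times> S) = emeasure lborel S * emeasure lborel S"
      unfolding S_def by (rule lborel.emeasure_pair_measure_Times) auto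
    then show "integrable (lborel \<Otimes>\<^sub>M lborel) (indicator (S \<times> S) :: real \<times> real \<Rightarrow> real)"
      by (intro integrable_real_indicator) (simp_all add: S_def)
    show "(\<lambda>p. indicator (S \<times> S) p * G (fst p) (snd p)) \<in> borel_measurable (lborel \<Otimes>\<^sub>M lborel)"
      unfolding S_def G_def by measurable
    show "AE p in lborel \<Otimes>\<^sub>M lborel. norm (indicator (S \<times> S) p * G (fst p) (snd p))
        \<le> norm (indicator (S \<times> S) p :: real)"
      using G_bound by (intro AE_I2) (auto simp: indicator_def mem_Times_iff)
  qed
  have "mom s t i (Suc j) = (\<integral>p. indicator (S \<times> S) p * G (fst p) (snd p) \<partial>lborel \<Otimes>\<^sub>M lborel)"
    unfolding mom_def set_lebesgue_integral_def S_def G_def weighted_monomial_def weight_def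
    by (simp add: lborel_prod field_simps)
  also have "\<dots> = (\<integral>x. \<integral>y. indicator (S \<times> S) (x, y) * G x y \<partial>lborel \<partial>lborel)"
    using lborel_pair.integral_fst'[OF integrable_G] by simp
  also have "\<dots> = (\<integral>x. indicator S x * (\<integral>y. G x y \<partial>lborel01) \<partial>lborel)"
  proof (rule Bochner_Integration.integral_cong[OF refl])
    fix x :: real
    have "(\<integral>y. indicator (S \<times> S) (x, y) * G x y \<partial>lborel)
        = indicator S x * (\<integral>y. indicator S y * G x y \<partial>lborel)"
      by (simp add: indicator_times mult.assoc)
    also have "(\<integral>y. indicator S y * G x y \<partial>lborel) = (\<integral>y. G x y \<partial>lborel01)"
      unfolding S_def by (subst integral_restrict_space) auto
    finally show "(\<integral>y. indicator (S \<times> S) (x, y) * G x y \<partial>lborel)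
        = indicator S x * (\<integral>y. G x y \<partial>lborel01)" .
  qed
  also have "\<dots> = (\<integral>x. \<integral>y. G x y \<partial>lborel01 \<partial>lborel01)"
    unfolding S_def by (subst integral_restrict_space) auto
  finally show ?thesis
    unfolding G_def kernel_moment_def by (simp only: integral_mult_right_zero)
qed

lemma eval_det_weighted_monomial:
  "eval_det k (weighted_monomial p t) X = (\<Prod>l<k. X l ^ p * weight t (X l)) * vandermonde k X"
proof -
  have "eval_det k (weighted_monomial p t) X
      = det (mat k k (\<lambda>(l, i). (X l ^ p * weight t (X l)) * X l ^ i * 1))"
    unfolding eval_det_def weighted_monomial_def
    by (intro arg_cong[where f = det] eq_matI) (auto simp: power_add mult_ac)
  also have "\<dots> = (\<Prod>l<k. X l ^ p * weight t (X l)) * (\<Prod>j<k. 1) * det (mat k k (\<lambda>(l, i). X l ^ i))"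
    by (rule det_mat_scaled)
  finally show ?thesis by (simp add: det_vandermonde)
qed

lemma andreief_kernel_moment:
  assumes X_pos: "\<And>l. l < k \<Longrightarrow> 0 < X l"
  defines "\<phi> \<equiv> \<lambda>l y. 1 / (X l + y)"
  shows "fact k * eval_det k (kernel_moment s t) X
      = (\<integral>Y. eval_det k \<phi> Y * eval_det k (weighted_monomial (Suc s) t) Y
          \<partial>Pi\<^sub>M {..<k} (\<lambda>_. lborel01))"
    and "integrable (Pi\<^sub>M {..<k} (\<lambda>_. lborel01))
      (\<lambda>Y. eval_det k \<phi> Y * eval_det k (weighted_monomial (Suc s) t) Y)"
proof -
  let ?\<psi> = "weighted_monomial (Suc s) t"
  define B where "B = 1 + (\<Sum>l<k. 1 / X l)"
  have \<phi>_le: "\<bar>\<phi> l y\<bar> \<le> B" if "l < k" "y \<in> space lborel01" for l y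
  proof -
    have "\<bar>\<phi> l y\<bar> \<le> 1 / X l"
      using X_pos[OF that(1)] that(2) by (simp add: \<phi>_def divide_left_mono)
    also have "\<dots> \<le> (\<Sum>l<k. 1 / X l)"
      using X_pos that(1) by (intro member_le_sum) (auto intro: less_imp_le)
    finally show ?thesis by (simp add: B_def)
  qed
  have \<psi>_le: "\<bar>?\<psi> j y\<bar> \<le> B" if "y \<in> space lborel01" for j y
  proof -
    have "0 \<le> (\<Sum>l<k. 1 / X l)"
      using X_pos by (intro sum_nonneg) (simp add: less_imp_le)
    then show ?thesis
      using weighted_monomial_le_1[of y "Suc s" t j] that by (simp add: B_def)
  qed
  have \<phi>_meas: "\<phi> l \<in> borel_measurable lborel01" for l
    unfolding \<phi>_def by (rule borel_measurable_lborel01) measurable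
  have \<psi>_meas: "?\<psi> j \<in> borel_measurable lborel01" for j
    by (rule borel_measurable_lborel01) measurable
  have "eval_det k (kernel_moment s t) X = det (mat k k (\<lambda>(l, j). \<integral>y. \<phi> l y * ?\<psi> j y \<partial>lborel01))"
    unfolding eval_det_def kernel_moment_def \<phi>_def by simp
  then show "fact k * eval_det k (kernel_moment s t) X
      = (\<integral>Y. eval_det k \<phi> Y * eval_det k ?\<psi> Y \<partial>Pi\<^sub>M {..<k} (\<lambda>_. lborel01))"
    using andreief[OF prob_space_lborel01 \<phi>_meas \<psi>_meas \<phi>_le \<psi>_le] by simp
  show "integrable (Pi\<^sub>M {..<k} (\<lambda>_. lborel01)) (\<lambda>Y. eval_det k \<phi> Y * eval_det k ?\<psi> Y)"
    by (rule integrable_eval_det_mult[OF prob_space_lborel01 \<phi>_meas \<psi>_meas \<phi>_le \<psi>_le])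
qed

lemma vandermonde_mult_eval_det_kernel_moment_pos:
  assumes X: "X \<in> space (Pi\<^sub>M {..<k} (\<lambda>_. lborel01))" and inj: "inj_on X {..<k}"
  shows "0 < vandermonde k X * eval_det k (kernel_moment s t) X"
proof -
  let ?P = "Pi\<^sub>M {..<k} (\<lambda>_. lborel01)"
  let ?\<phi> = "\<lambda>l y. 1 / (X l + y)" and ?\<psi> = "weighted_monomial (Suc s) t"
  have X01: "0 < X l" "X l < 1" if "l < k" for l
    using space_PiM_lborel01D[OF X that] by auto
  have VX: "vandermonde k X \<noteq> 0"
    by (rule vandermonde_nonzero[OF inj])
  \<comment> \<open>the Cauchy determinant in the integrand contributes the factor vandermonde k X\<close>
  define F where "F Y = eval_det k ?\<phi> Y * eval_det k ?\<psi> Y / vandermonde k X" for Y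
  have F_eq: "F Y = vandermonde k Y ^ 2 * (\<Prod>i<k. \<Prod>j<k. 1 / (Y i + X j))
      * (\<Prod>l<k. Y l ^ Suc s * weight t (Y l))" if Y: "Y \<in> space ?P" for Y
  proof -
    have Y01: "0 < Y l" "Y l < 1" if "l < k" for l
      using space_PiM_lborel01D[OF Y that] by auto
    have "eval_det k ?\<phi> Y = det (mat k k (\<lambda>(i, j). 1 / (Y i + X j)))"
      unfolding eval_det_def
      by (intro arg_cong[where f = det] eq_matI) (auto simp: add.commute)
    also have "\<dots> = vandermonde k Y * vandermonde k X * (\<Prod>i<k. \<Prod>j<k. 1 / (Y i + X j))"
      by (rule det_cauchy) (smt (verit) X01(1) Y01(1))
    finally show ?thesis
      using VX unfolding F_def eval_det_weighted_monomial by (simp add: power2_eq_square)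
  qed
  have "0 < (\<integral>Y. F Y \<partial>?P)"
  proof (rule integral_PiM_lborel01_pos)
    show "integrable ?P F"
      unfolding F_def using andreief_kernel_moment(2)[of k X s t] X01
      by (intro integrable_divide_zero) simp
    fix Y assume Y: "Y \<in> space ?P"
    have Y01: "0 < Y l" "Y l < 1" if "l < k" for l
      using space_PiM_lborel01D[OF Y that] by auto
    have "0 < (\<Prod>i<k. \<Prod>j<k. 1 / (Y i + X j)) * (\<Prod>l<k. Y l ^ Suc s * weight t (Y l))"
      using Y01 X01 weight_pos by (intro mult_pos_pos prod_pos) (auto intro!: add_pos_pos)
    then show "0 \<le> F Y" and "inj_on Y {..<k} \<Longrightarrow> 0 < F Y"
      unfolding F_eq[OF Y] mult.assoc
      by (auto intro!: mult_pos_pos simp: vandermonde_nonzero)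
  qed
  moreover have "fact k * (vandermonde k X * eval_det k (kernel_moment s t) X)
      = vandermonde k X ^ 2 * (\<integral>Y. F Y \<partial>?P)"
    unfolding mult.left_commute[of "fact k"] F_def
    using VX andreief_kernel_moment(1)[of k X s t] X01 by (simp add: power2_eq_square)
  ultimately have "0 < fact k * (vandermonde k X * eval_det k (kernel_moment s t) X)"
    using VX by simp
  then show ?thesis by (rule zero_less_mult_pos) simp
qed

lemma det_mom_pos: "0 < det (mat k k (\<lambda>(i, j). mom s t (a + i) (Suc j)))"
proof -
  let ?P = "Pi\<^sub>M {..<k} (\<lambda>_. lborel01)"
  let ?\<phi> = "weighted_monomial (s + a) t" and ?\<psi> = "kernel_moment s t"
  have \<phi>_le: "\<bar>?\<phi> i x\<bar> \<le> 1" and \<psi>_le: "\<bar>?\<psi> i x\<bar> \<le> 1" if "x \<in> space lborel01" for i x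
    using that weighted_monomial_le_1 kernel_moment_le_1 by auto
  have \<phi>_meas: "?\<phi> i \<in> borel_measurable lborel01" for i
    by (rule borel_measurable_lborel01) measurable
  note \<psi>_meas = borel_measurable_kernel_moment
  have "mat k k (\<lambda>(i, j). mom s t (a + i) (Suc j))
      = mat k k (\<lambda>(i, j). \<integral>x. ?\<phi> i x * ?\<psi> j x \<partial>lborel01)"
    by (rule eq_matI) (auto simp: mom_Suc_eq_integral_kernel_moment weighted_monomial_shift)
  then have "fact k * det (mat k k (\<lambda>(i, j). mom s t (a + i) (Suc j)))
      = (\<integral>X. eval_det k ?\<phi> X * eval_det k ?\<psi> X \<partial>?P)"
    using andreief[OF prob_space_lborel01 \<phi>_meas \<psi>_meas \<phi>_le \<psi>_le] by simp
  moreover have "0 < (\<integral>X. eval_det k ?\<phi> X * eval_det k ?\<psi> X \<partial>?P)"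
  proof (rule integral_PiM_lborel01_pos)
    show "integrable ?P (\<lambda>X. eval_det k ?\<phi> X * eval_det k ?\<psi> X)"
      by (rule integrable_eval_det_mult[OF prob_space_lborel01 \<phi>_meas \<psi>_meas \<phi>_le \<psi>_le])
    fix X assume X: "X \<in> space ?P"
    have weights_pos: "0 < (\<Prod>l<k. X l ^ (s + a) * weight t (X l))"
      using space_PiM_lborel01D[OF X] weight_pos by (intro prod_pos) auto
    have factor: "eval_det k ?\<phi> X * eval_det k ?\<psi> X
        = (\<Prod>l<k. X l ^ (s + a) * weight t (X l)) * (vandermonde k X * eval_det k ?\<psi> X)"
      by (simp add: eval_det_weighted_monomial mult.assoc)
    have "0 \<le> vandermonde k X * eval_det k ?\<psi> X"
    proof (cases "inj_on X {..<k}")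
      case True
      then show ?thesis
        using vandermonde_mult_eval_det_kernel_moment_pos[OF X] by (simp add: less_imp_le)
    qed (simp add: eval_det_eq_0_if_not_inj)
    then show "0 \<le> eval_det k ?\<phi> X * eval_det k ?\<psi> X"
      unfolding factor using weights_pos by simp
    show "0 < eval_det k ?\<phi> X * eval_det k ?\<psi> X" if "inj_on X {..<k}"
      unfolding factor
      using weights_pos vandermonde_mult_eval_det_kernel_moment_pos[OF X that] by simp
  qed
  ultimately have "0 < fact k * det (mat k k (\<lambda>(i, j). mom s t (a + i) (Suc j)))"
    by simp
  then show ?thesis by (rule zero_less_mult_pos) simp
qed

lemma mom_Suc: "mom (Suc s) t i j = mom s t (Suc i) (Suc j)"
  unfolding mom_def by simp

lemma xi_pos: "0 < xi n s t"
  using det_mom_pos[of n s t 0] by (simp add: xi_def)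

lemma tau_Suc_pos: "0 < tau n (Suc s) t"
  using det_mom_pos[of n s t 1] by (simp add: tau_def mom_Suc)

section \<open>Bordered determinants and the recurrence\<close>

definition bordered_det :: "(nat \<Rightarrow> nat \<Rightarrow> 'a :: comm_ring_1) \<Rightarrow> nat \<Rightarrow> (nat \<Rightarrow> 'a) \<Rightarrow> 'a" where
  "bordered_det c n v = det (mat (Suc n) (Suc n) (\<lambda>(i, j). if j < n then c i j else v i))"

definition border_cofactor :: "(nat \<Rightarrow> nat \<Rightarrow> 'a :: comm_ring_1) \<Rightarrow> nat \<Rightarrow> nat \<Rightarrow> 'a" where
  "border_cofactor c n i = cofactor (mat (Suc n) (Suc n) (\<lambda>(i, j). if j < n then c i j else 0)) i n"

lemma bordered_det_expand: "bordered_det c n v = (\<Sum>i<Suc n. v i * border_cofactor c n i)"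
proof -
  let ?A = "mat (Suc n) (Suc n) (\<lambda>(i, j). if j < n then c i j else v i)"
  let ?B = "mat (Suc n) (Suc n) (\<lambda>(i, j). if j < n then c i j else 0)"
  have "bordered_det c n v = (\<Sum>i<Suc n. ?A $$ (i, n) * cofactor ?A i n)"
    unfolding bordered_det_def by (rule laplace_expansion_column) auto
  also have "\<dots> = (\<Sum>i<Suc n. v i * border_cofactor c n i)"
  proof (rule sum.cong[OF refl])
    fix i assume "i \<in> {..<Suc n}"
    moreover have "mat_delete ?A i n = mat_delete ?B i n"
      unfolding mat_delete_def by (rule eq_matI) auto
    ultimately show "?A $$ (i, n) * cofactor ?A i n = v i * border_cofactor c n i"
      unfolding border_cofactor_def cofactor_def by simp
  qed
  finally show ?thesis .
qed

lemma border_cofactor_column_sum: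
  assumes "j \<le> n"
  shows "(\<Sum>i<Suc n. c i j * border_cofactor c n i)
    = (if j = n then det (mat (Suc n) (Suc n) (\<lambda>(i, j). c i j)) else 0)"
proof -
  have "(\<Sum>i<Suc n. c i j * border_cofactor c n i) = bordered_det c n (\<lambda>i. c i j)"
    by (simp add: bordered_det_expand)
  also have "\<dots> = (if j = n then det (mat (Suc n) (Suc n) (\<lambda>(i, j). c i j)) else 0)"
  proof (cases "j = n")
    case True
    have "bordered_det c n (\<lambda>i. c i j) = det (mat (Suc n) (Suc n) (\<lambda>(i, j). c i j))"
      unfolding bordered_det_def using True
      by (intro arg_cong[where f = det] eq_matI) (auto simp: less_Suc_eq)
    with True show ?thesis by simp
  next
    case False
    have "bordered_det c n (\<lambda>i. c i j) = 0"
      unfolding bordered_det_def using assms False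
      by (intro det_identical_columns[of _ "Suc n" j n]) auto
    with False show ?thesis by simp
  qed
  finally show ?thesis .
qed

lemma bordered_det_powers_shift:
  "x * bordered_det c n (\<lambda>i. x ^ i)
    = (\<Sum>i<Suc (Suc n). x ^ i * (if i = 0 then 0 else border_cofactor c n (i - 1)))"
  unfolding bordered_det_expand sum.lessThan_Suc_shift[of _ "Suc n"]
  by (simp add: sum_distrib_left mult_ac distrib_left)

lemma bordered_det_powers_pad:
  "bordered_det c n (\<lambda>i. x ^ i)
    = (\<Sum>i<Suc (Suc n). x ^ i * (if i < Suc n then border_cofactor c n i else 0))"
  unfolding bordered_det_expand by (simp add: sum.lessThan_Suc[of _ "Suc n"])

lemma border_cofactor_top: "border_cofactor c n n = det (mat n n (\<lambda>(i, j). c i j))"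
proof -
  have "mat_delete (mat (Suc n) (Suc n) (\<lambda>(i, j). if j < n then c i j else 0)) n n
      = mat n n (\<lambda>(i, j). c i j)"
    unfolding mat_delete_def by (rule eq_matI) auto
  then show ?thesis unfolding border_cofactor_def cofactor_def by simp
qed

lemma left_null_vector_eq_0:
  fixes M :: "nat \<Rightarrow> nat \<Rightarrow> 'a :: field"
  assumes "det (mat n n (\<lambda>(i, j). M i j)) \<noteq> 0"
    and "\<And>j. j < n \<Longrightarrow> (\<Sum>i<n. M i j * r i) = 0"
    and "i < n"
  shows "r i = 0"
proof -
  let ?A = "mat n n (\<lambda>(j, i). M i j)"
  have "?A = transpose_mat (mat n n (\<lambda>(i, j). M i j))"
    by (rule eq_matI) auto
  then have "det ?A \<noteq> 0"
    using assms(1) by (simp add: det_transpose[of _ n])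
  then have no_null: "\<not> (\<exists>v. v \<in> carrier_vec n \<and> v \<noteq> 0\<^sub>v n \<and> ?A *\<^sub>v v = 0\<^sub>v n)"
    using det_0_iff_vec_prod_zero_field[of ?A n] by auto
  have "?A *\<^sub>v vec n r = 0\<^sub>v n"
    using assms(2) by (intro eq_vecI) (auto simp: scalar_prod_def atLeast0LessThan)
  then have "vec n r = 0\<^sub>v n"
    using no_null vec_carrier[of n r] by blast
  then show ?thesis
    using assms(3) by (metis index_vec index_zero_vec(1))
qed

lemma bordered_det_shift_recurrence:
  fixes m :: "nat \<Rightarrow> nat \<Rightarrow> 'a :: field" and N :: nat and x :: 'a
  defines "c1 \<equiv> \<lambda>i j. m i (Suc j)" and "c2 \<equiv> \<lambda>i j. m (Suc i) (Suc j)"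
  assumes nz: "det (mat (Suc N) (Suc N) (\<lambda>(i, j). c1 i j)) \<noteq> 0"
  shows "det (mat N N (\<lambda>(i, j). c2 i j)) * bordered_det c1 (Suc N) (\<lambda>i. x ^ i)
    = det (mat (Suc N) (Suc N) (\<lambda>(i, j). c1 i j)) * x * bordered_det c2 N (\<lambda>i. x ^ i)
      - det (mat (Suc N) (Suc N) (\<lambda>(i, j). c2 i j)) * bordered_det c1 N (\<lambda>i. x ^ i)"
proof -
  define D1 where "D1 k = det (mat k k (\<lambda>(i, j). c1 i j))" for k
  define D2 where "D2 k = det (mat k k (\<lambda>(i, j). c2 i j))" for k
  \<comment> \<open>coefficients of the difference of both sides as a polynomial in x\<close>
  define r where "r i = D2 N * border_cofactor c1 (Suc N) i
      - D1 (Suc N) * (if i = 0 then 0 else border_cofactor c2 N (i - 1))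
      + D2 (Suc N) * (if i < Suc N then border_cofactor c1 N i else 0)" for i
  have "D2 N * bordered_det c1 (Suc N) (\<lambda>i. x ^ i)
      - (D1 (Suc N) * x * bordered_det c2 N (\<lambda>i. x ^ i)
         - D2 (Suc N) * bordered_det c1 N (\<lambda>i. x ^ i))
      = (\<Sum>i<Suc (Suc N). x ^ i * r i)"
    using bordered_det_powers_shift[where x = x and c = c2 and n = N]
      bordered_det_powers_pad[where x = x and c = c1 and n = N]
    unfolding r_def bordered_det_expand[of c1 "Suc N"] mult.assoc[of "D1 (Suc N)" x]
    by (simp add: sum_distrib_left sum_subtractf[symmetric] sum.distrib[symmetric] algebra_simps)
  moreover have r_top: "r (Suc N) = 0"
    unfolding r_def using border_cofactor_top[of c1 "Suc N"] border_cofactor_top[of c2 N]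
    by (simp add: D1_def D2_def)
  moreover have "(\<Sum>i<Suc N. c1 i j * r i) = 0" if j: "j < Suc N" for j
  proof -
    have top: "(\<Sum>i<Suc (Suc N). c1 i j * border_cofactor c1 (Suc N) i) = 0"
      using border_cofactor_column_sum[of j "Suc N" c1] j by simp
    have shift: "(\<Sum>i<Suc (Suc N). c1 i j * (if i = 0 then 0 else border_cofactor c2 N (i - 1)))
        = (\<Sum>i<Suc N. c2 i j * border_cofactor c2 N i)"
      unfolding sum.lessThan_Suc_shift[of _ "Suc N"] by (simp add: c1_def c2_def)
    have trunc: "(\<Sum>i<Suc (Suc N). c1 i j * (if i < Suc N then border_cofactor c1 N i else 0))
        = (\<Sum>i<Suc N. c1 i j * border_cofactor c1 N i)"
      by (simp add: sum.lessThan_Suc[of _ "Suc N"])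
    have low: "D1 (Suc N) * (\<Sum>i<Suc N. c2 i j * border_cofactor c2 N i)
        = D2 (Suc N) * (\<Sum>i<Suc N. c1 i j * border_cofactor c1 N i)"
      using border_cofactor_column_sum[of j N c1] border_cofactor_column_sum[of j N c2] j
      by (simp add: D1_def D2_def)
    have "(\<Sum>i<Suc (Suc N). c1 i j * r i)
        = D2 N * (\<Sum>i<Suc (Suc N). c1 i j * border_cofactor c1 (Suc N) i)
          - D1 (Suc N)
            * (\<Sum>i<Suc (Suc N). c1 i j * (if i = 0 then 0 else border_cofactor c2 N (i - 1)))
          + D2 (Suc N)
            * (\<Sum>i<Suc (Suc N). c1 i j * (if i < Suc N then border_cofactor c1 N i else 0))"
      unfolding r_def
      by (simp add: sum_distrib_left sum_subtractf[symmetric] sum.distrib[symmetric] algebra_simps)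
    also have "\<dots> = 0"
      unfolding top shift trunc low by simp
    finally have "(\<Sum>i<Suc (Suc N). c1 i j * r i) = 0" .
    then show ?thesis using r_top by simp
  qed
  then have "r i = 0" if "i < Suc N" for i
    using left_null_vector_eq_0[of "Suc N" c1 r i] nz that by (simp add: D1_def)
  ultimately show ?thesis
    unfolding D1_def D2_def by (simp add: less_Suc_eq)
qed

lemma xi_eq_det: "xi k s t = det (mat k k (\<lambda>(i, j). mom s t i (Suc j)))"
  by (simp add: xi_def)

lemma tau_Suc_eq_det: "tau k (Suc s) t = det (mat k k (\<lambda>(i, j). mom s t (Suc i) (Suc j)))"
  by (simp add: tau_def mom_Suc)

lemma Qpoly_eq_bordered_det:
  "Qpoly k s t x = bordered_det (\<lambda>i j. mom s t i (Suc j)) k (\<lambda>i. x ^ i) / xi k s t"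
  unfolding Qpoly_def bordered_det_def xi_eq_det by (simp only: Suc_eq_plus1)

lemma Ppoly_Suc_eq_bordered_det:
  "Ppoly k (Suc s) t x
    = bordered_det (\<lambda>i j. mom s t (Suc i) (Suc j)) k (\<lambda>i. x ^ i) / tau k (Suc s) t"
  unfolding Ppoly_def bordered_det_def tau_Suc_eq_det mom_Suc by (simp only: Suc_eq_plus1)

theorem proposition2p6:
  fixes n s t :: nat and x :: real
  assumes "n \<ge> 1"
  shows "Qpoly n s t x = x * Ppoly (n - 1) (s + 1) t x
           - (xi (n - 1) s t * tau n (s + 1) t) / (xi n s t * tau (n - 1) (s + 1) t)
             * Qpoly (n - 1) s t x"
proof -
  obtain N where n: "n = Suc N" using assms by (cases n) auto
  have "tau N (Suc s) t * bordered_det (\<lambda>i j. mom s t i (Suc j)) (Suc N) (\<lambda>i. x ^ i)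
      = xi (Suc N) s t * x * bordered_det (\<lambda>i j. mom s t (Suc i) (Suc j)) N (\<lambda>i. x ^ i)
        - tau (Suc N) (Suc s) t * bordered_det (\<lambda>i j. mom s t i (Suc j)) N (\<lambda>i. x ^ i)"
    using bordered_det_shift_recurrence[where m = "mom s t" and N = N and x = x]
      xi_pos[of "Suc N" s t]
    unfolding xi_eq_det tau_Suc_eq_det by simp
  moreover have "xi (Suc N) s t \<noteq> 0" "xi N s t \<noteq> 0" "tau N (Suc s) t \<noteq> 0"
    using xi_pos tau_Suc_pos by (simp_all add: less_imp_neq[symmetric])
  ultimately show ?thesis
    unfolding n by (simp add: Qpoly_eq_bordered_det Ppoly_Suc_eq_bordered_det field_simps)
qed

end
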